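(* Let $K$ be a field of characteristic $0$, let $L=\mathcal{L}(x,y)$ be the free Lie algebra over $K$ freely generated by $x,y$, and let $\delta$ be the derivation of $L$ with $\delta(x)=0$, $\delta(y)=x$. If $g\in L$ satisfies $[g,x]+[\delta(g),y]=0$ and $g\notin \operatorname{span}_K\{x\}$, then $g=\alpha y+\beta x$ for some $\alpha,\beta\in K$ with $\alpha\neq 0$. *)

theory Defs
  imports Main
begin

text \<open>Free associative algebra K<x,y> on two generators: an element is a
coefficient function on words over the alphabet {x,y}, encoded as bool lists
(False = x, True = y). Elements of the free Lie algebra L(x,y) are realised as
the Lie subalgebra generated by x and y inside K<x,y> (the standard model of
the free Lie algebra). Such elements automatically have finite support.\<close>

type_synonym 'k ncpoly = "bool list \<Rightarrow> 'k"

definition nc_add :: "'k::field ncpoly \<Rightarrow> 'k ncpoly \<Rightarrow> 'k ncpoly" where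
  "nc_add p q = (\<lambda>w. p w + q w)"

definition nc_smult :: "'k::field \<Rightarrow> 'k ncpoly \<Rightarrow> 'k ncpoly" where
  "nc_smult c p = (\<lambda>w. c * p w)"

definition nc_zero :: "'k::field ncpoly" where
  "nc_zero = (\<lambda>w. 0)"

definition nc_mult :: "'k::field ncpoly \<Rightarrow> 'k ncpoly \<Rightarrow> 'k ncpoly" where
  "nc_mult p q = (\<lambda>w. \<Sum>i\<le>length w. p (take i w) * q (drop i w))"

definition lie_bracket :: "'k::field ncpoly \<Rightarrow> 'k ncpoly \<Rightarrow> 'k ncpoly" where
  "lie_bracket p q = (\<lambda>w. nc_mult p q w - nc_mult q p w)"

definition gen_x :: "'k::field ncpoly" where
  "gen_x = (\<lambda>w. if w = [False] then 1 else 0)"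

definition gen_y :: "'k::field ncpoly" where
  "gen_y = (\<lambda>w. if w = [True] then 1 else 0)"

inductive_set free_lie :: "'k::field ncpoly set" where
  gx: "gen_x \<in> free_lie"
| gy: "gen_y \<in> free_lie"
| add: "a \<in> free_lie \<Longrightarrow> b \<in> free_lie \<Longrightarrow> nc_add a b \<in> free_lie"
| smult: "a \<in> free_lie \<Longrightarrow> nc_smult c a \<in> free_lie"
| brk: "a \<in> free_lie \<Longrightarrow> b \<in> free_lie \<Longrightarrow> lie_bracket a b \<in> free_lie"

definition lie_derivation :: "('k::field ncpoly \<Rightarrow> 'k ncpoly) \<Rightarrow> bool" where
  "lie_derivation d \<longleftrightarrow>
     (\<forall>a\<in>free_lie. d a \<in> free_lie) \<and>
     (\<forall>a\<in>free_lie. \<forall>b\<in>free_lie. d (nc_add a b) = nc_add (d a) (d b)) \<and>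
     (\<forall>a\<in>free_lie. \<forall>c. d (nc_smult c a) = nc_smult c (d a)) \<and>
     (\<forall>a\<in>free_lie. \<forall>b\<in>free_lie.
        d (lie_bracket a b) = nc_add (lie_bracket (d a) b) (lie_bracket a (d b)))"

end

theory Submission
  imports Defs
begin

text \<open>Inside \<open>K\<langle>x,y\<rangle>\<close> the derivation \<open>\<delta>\<close> is the derivation \<open>D\<close> with \<open>D x = 0\<close>,
\<open>D y = x\<close>. Comparing coefficients of a word \<open>c\<^sub>1 v c\<^sub>2\<close> in \<open>[g,x] + [D g,y] = 0\<close>
shows (using \<open>2 \<noteq> 0\<close>) that \<open>g\<close> and \<open>D g\<close> are invariant under cyclic rotation of words
and that \<open>(D g)(u) = g(u')\<close> whenever \<open>u'\<close> arises from \<open>u\<close> by turning one \<open>x\<close> into \<open>y\<close>.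
Since \<open>(D g)(u)\<close> is the sum of these \<open>g(u')\<close> over all occurrences of \<open>x\<close> in \<open>u\<close>, a word
with \<open>k \<ge> 2\<close> letters \<open>x\<close> satisfies \<open>(k - 1)(D g)(u) = 0\<close>, so in characteristic \<open>0\<close>
the coefficient of \<open>g\<close> vanishes on every word containing both letters. Lie elements
also vanish on the powers \<open>x\<^sup>n\<close>, \<open>y\<^sup>n\<close> with \<open>n \<noteq> 1\<close>, leaving \<open>g = \<alpha> y + \<beta> x\<close>.\<close>

definition nc_deriv :: "'k::field ncpoly \<Rightarrow> 'k ncpoly" where
  "nc_deriv p = (\<lambda>w. \<Sum>i<length w. if w!i then 0 else p (w[i:=True]))"

definition nc_lquot :: "bool \<Rightarrow> 'k::field ncpoly \<Rightarrow> 'k ncpoly" where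
  "nc_lquot c p = (\<lambda>v. p (c#v))"

lemma nc_deriv_Nil [simp]: "nc_deriv p [] = 0"
  by (simp add: nc_deriv_def)

lemma nc_deriv_Cons:
  "nc_deriv p (c#w) = (if c then 0 else p (True#w)) + nc_deriv (nc_lquot c p) w"
  unfolding nc_deriv_def nc_lquot_def length_Cons sum.lessThan_Suc_shift
  by (simp cong: if_cong)

lemma nc_deriv_snoc:
  "nc_deriv p (w@[c]) = nc_deriv (\<lambda>u. p (u@[c])) w + (if c then 0 else p (w@[True]))"
  unfolding nc_deriv_def length_append_singleton sum.lessThan_Suc
  by (auto intro!: sum.cong simp: nth_append list_update_append)

lemma nc_deriv_eq_sum_x_positions:
  "nc_deriv p w = (\<Sum>i\<in>{i. i < length w \<and> \<not> w!i}. p (w[i:=True]))"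
  unfolding nc_deriv_def by (simp add: sum.If_cases) (rule sum.cong; auto)

lemma nc_mult_Nil [simp]: "nc_mult p q [] = p [] * q []"
  by (simp add: nc_mult_def)

lemma nc_mult_Cons: "nc_mult p q (c#w) = p [] * q (c#w) + nc_mult (nc_lquot c p) q w"
  unfolding nc_mult_def nc_lquot_def length_Cons sum.atMost_Suc_shift
  by simp

lemma nc_mult_add_left: "nc_mult (\<lambda>w. p w + r w) q = (\<lambda>w. nc_mult p q w + nc_mult r q w)"
  unfolding nc_mult_def by (simp add: distrib_right sum.distrib)

lemma nc_lquot_nc_deriv:
  "nc_lquot c (nc_deriv p) = (\<lambda>w. (if c then 0 else p (True#w)) + nc_deriv (nc_lquot c p) w)"
  unfolding nc_lquot_def by (rule ext) (simp add: nc_deriv_Cons[unfolded nc_lquot_def])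

lemma nc_deriv_nc_mult:
  "nc_deriv (nc_mult p q) w = nc_mult (nc_deriv p) q w + nc_mult p (nc_deriv q) w"
proof (induction w arbitrary: p q)
  case Nil
  then show ?case by simp
next
  case (Cons c w)
  have lquot_mult: "nc_lquot c (nc_mult p q) = (\<lambda>v. p [] * q (c#v) + nc_mult (nc_lquot c p) q v)"
    by (rule ext) (simp add: nc_lquot_def nc_mult_Cons[unfolded nc_lquot_def])
  have "nc_deriv (nc_mult p q) (c#w)
      = (if c then 0 else nc_mult p q (True#w)) + nc_deriv (nc_lquot c (nc_mult p q)) w"
    by (rule nc_deriv_Cons)
  also have "nc_deriv (nc_lquot c (nc_mult p q)) w
      = p [] * nc_deriv (nc_lquot c q) w + nc_deriv (nc_mult (nc_lquot c p) q) w"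
    unfolding lquot_mult nc_deriv_def nc_lquot_def
    by (auto simp: sum.distrib[symmetric] sum_distrib_left nc_mult_Cons[unfolded nc_lquot_def]
        intro!: sum.cong)
  also have "nc_deriv (nc_mult (nc_lquot c p) q) w
      = nc_mult (nc_deriv (nc_lquot c p)) q w + nc_mult (nc_lquot c p) (nc_deriv q) w"
    by (rule Cons.IH)
  finally have lhs: "nc_deriv (nc_mult p q) (c#w) = (if c then 0 else nc_mult p q (True#w)) +
      (p [] * nc_deriv (nc_lquot c q) w +
       (nc_mult (nc_deriv (nc_lquot c p)) q w + nc_mult (nc_lquot c p) (nc_deriv q) w))" .
  have "nc_mult (nc_deriv p) q (c#w) = nc_mult (nc_lquot c (nc_deriv p)) q w"
    by (simp add: nc_mult_Cons)
  also have "\<dots> = (if c then 0 else nc_mult (nc_lquot True p) q w)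
                 + nc_mult (nc_deriv (nc_lquot c p)) q w"
    unfolding nc_lquot_nc_deriv
    by (cases c) (simp_all add: nc_mult_add_left nc_mult_def nc_lquot_def)
  finally have rhs1: "nc_mult (nc_deriv p) q (c#w) = \<dots>" .
  have rhs2: "nc_mult p (nc_deriv q) (c#w) = p [] * ((if c then 0 else q (True#w))
      + nc_deriv (nc_lquot c q) w) + nc_mult (nc_lquot c p) (nc_deriv q) w"
    by (simp add: nc_mult_Cons nc_deriv_Cons)
  show ?case
    unfolding lhs rhs1 rhs2 nc_mult_Cons[of p q True w]
    by (cases c) (simp_all add: algebra_simps)
qed

lemma nc_deriv_nc_add: "nc_deriv (nc_add a b) = nc_add (nc_deriv a) (nc_deriv b)"
  unfolding nc_deriv_def nc_add_def by (auto simp: sum.distrib[symmetric] intro!: sum.cong)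

lemma nc_deriv_nc_smult: "nc_deriv (nc_smult c a) = nc_smult c (nc_deriv a)"
  unfolding nc_deriv_def nc_smult_def
  by (rule ext) (simp add: sum_distrib_left if_distrib cong: if_cong)

lemma nc_deriv_diff: "nc_deriv (\<lambda>w. a w - b w) = (\<lambda>w. nc_deriv a w - nc_deriv b w)"
  unfolding nc_deriv_def by (rule ext) (simp add: sum_subtractf[symmetric] if_distrib cong: if_cong)

lemma nc_deriv_lie_bracket:
  "nc_deriv (lie_bracket a b) = nc_add (lie_bracket (nc_deriv a) b) (lie_bracket a (nc_deriv b))"
  unfolding lie_bracket_def nc_deriv_diff nc_add_def
  by (rule ext) (simp add: nc_deriv_nc_mult)

lemma nc_deriv_gen_x: "nc_deriv gen_x = nc_zero"
proof
  fix w :: "bool list"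
  have "w[i:=True] \<noteq> [False]" if i: "i < length w" for i
  proof
    assume eq: "w[i:=True] = [False]"
    then have "i = 0" using i by (auto dest: arg_cong[where f=length])
    moreover have "w[i:=True] ! i" using i by simp
    ultimately show False using eq by simp
  qed
  then show "nc_deriv gen_x w = nc_zero w"
    by (auto simp: nc_deriv_def gen_x_def nc_zero_def intro!: sum.neutral)
qed

lemma nc_deriv_gen_y: "nc_deriv gen_y = gen_x"
proof
  fix w :: "bool list"
  show "nc_deriv gen_y w = gen_x w"
  proof (cases "length w \<ge> 2")
    case True
    then have "w[i:=True] \<noteq> [True]" "w \<noteq> [False]" for i
      by (auto dest: arg_cong[where f=length])
    then show ?thesis
      by (auto simp: nc_deriv_def gen_x_def gen_y_def intro!: sum.neutral)
  next
    case False
    then consider "w = []" | c where "w = [c]"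
      by (cases w) (auto simp: Suc_le_eq)
    then show ?thesis
      by cases (auto simp: nc_deriv_def gen_x_def gen_y_def)
  qed
qed

lemma lie_derivation_eq_nc_deriv:
  assumes \<delta>: "lie_derivation \<delta>" and "\<delta> gen_x = nc_zero" and "\<delta> gen_y = gen_x"
    and "a \<in> free_lie"
  shows "\<delta> a = nc_deriv a"
  using \<open>a \<in> free_lie\<close>
proof (induction rule: free_lie.induct)
  case gx
  then show ?case by (simp add: assms(2) nc_deriv_gen_x)
next
  case gy
  then show ?case by (simp add: assms(3) nc_deriv_gen_y)
next
  case (add a b)
  then show ?case using \<delta> by (simp add: lie_derivation_def nc_deriv_nc_add)
next
  case (smult a c)
  then show ?case using \<delta> by (simp add: lie_derivation_def nc_deriv_nc_smult)
next
  case (brk a b)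
  then show ?case using \<delta> by (simp add: lie_derivation_def nc_deriv_lie_bracket)
qed

lemma nc_mult_replicate_commute: "nc_mult a b (replicate n c) = nc_mult b a (replicate n c)"
proof -
  have "nc_mult a b (replicate n c) = (\<Sum>i\<in>{0..n}. a (replicate i c) * b (replicate (n - i) c))"
    unfolding nc_mult_def by (intro sum.cong) (auto simp: min_def)
  also have "\<dots> = (\<Sum>i\<in>{0..n}. a (replicate (n - i) c) * b (replicate (n - (n - i)) c))"
    by (subst sum.atLeastAtMost_rev) simp
  also have "\<dots> = nc_mult b a (replicate n c)"
    unfolding nc_mult_def by (intro sum.cong) (auto simp: min_def mult.commute)
  finally show ?thesis .
qed

lemma free_lie_replicate_eq_0:
  assumes "p \<in> free_lie" and "n \<noteq> 1"
  shows "p (replicate n c) = 0"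
  using assms
proof (induction rule: free_lie.induct)
  case gx
  then show ?case by (auto simp: gen_x_def dest: arg_cong[where f=length])
next
  case gy
  then show ?case by (auto simp: gen_y_def dest: arg_cong[where f=length])
next
  case (add a b)
  then show ?case by (simp add: nc_add_def)
next
  case (smult a d)
  then show ?case by (simp add: nc_smult_def)
next
  case (brk a b)
  then show ?case by (simp add: lie_bracket_def nc_mult_replicate_commute)
qed

lemma nc_mult_snoc_if_letter_supported:
  assumes "\<And>u. length u \<noteq> 1 \<Longrightarrow> q u = 0"
  shows "nc_mult p q (w@[d]) = p w * q [d]"
proof -
  let ?f = "\<lambda>i. p (take i (w@[d])) * q (drop i (w@[d]))"
  have "nc_mult p q (w@[d]) = sum ?f {..Suc (length w)}"
    by (simp add: nc_mult_def)
  also have "\<dots> = ?f (length w) + sum ?f ({..Suc (length w)} - {length w})"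
    by (rule sum.remove) auto
  also have "sum ?f ({..Suc (length w)} - {length w}) = 0"
    using assms by (intro sum.neutral) auto
  finally show ?thesis by simp
qed

lemma nc_mult_Cons_if_letter_supported:
  assumes "\<And>u. length u \<noteq> 1 \<Longrightarrow> q u = 0"
  shows "nc_mult q p (d#w) = q [d] * p w"
proof -
  let ?f = "\<lambda>i. q (take i (d#w)) * p (drop i (d#w))"
  have "nc_mult q p (d#w) = sum ?f {..Suc (length w)}"
    by (simp add: nc_mult_def)
  also have "\<dots> = ?f 1 + sum ?f ({..Suc (length w)} - {1})"
    by (rule sum.remove) auto
  also have "sum ?f ({..Suc (length w)} - {1}) = 0"
    using assms by (intro sum.neutral) auto
  finally show ?thesis by simp
qed

lemma gen_x_eq_0: "length u \<noteq> 1 \<Longrightarrow> gen_x u = 0"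
  by (auto simp: gen_x_def)

lemma gen_y_eq_0: "length u \<noteq> 1 \<Longrightarrow> gen_y u = 0"
  by (auto simp: gen_y_def)

lemma bracket_equation_coeffs:
  assumes "nc_add (lie_bracket g gen_x) (lie_bracket h gen_y) = nc_zero"
  shows "(if c\<^sub>1 then h (v@[c\<^sub>2]) else g (v@[c\<^sub>2])) = (if c\<^sub>2 then h (c\<^sub>1#v) else g (c\<^sub>1#v))"
proof -
  have "nc_mult g gen_x (c\<^sub>1 # v @ [c\<^sub>2]) = g (c\<^sub>1#v) * gen_x [c\<^sub>2]"
    "nc_mult h gen_y (c\<^sub>1 # v @ [c\<^sub>2]) = h (c\<^sub>1#v) * gen_y [c\<^sub>2]"
    using nc_mult_snoc_if_letter_supported[OF gen_x_eq_0, where p=g and w="c\<^sub>1#v"]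
      nc_mult_snoc_if_letter_supported[OF gen_y_eq_0, where p=h and w="c\<^sub>1#v"] by simp_all
  moreover have "nc_mult gen_x g (c\<^sub>1 # v @ [c\<^sub>2]) = gen_x [c\<^sub>1] * g (v@[c\<^sub>2])"
    "nc_mult gen_y h (c\<^sub>1 # v @ [c\<^sub>2]) = gen_y [c\<^sub>1] * h (v@[c\<^sub>2])"
    by (simp_all add: nc_mult_Cons_if_letter_supported gen_x_eq_0 gen_y_eq_0)
  moreover have "nc_add (lie_bracket g gen_x) (lie_bracket h gen_y) (c\<^sub>1 # v @ [c\<^sub>2]) = 0"
    using assms by (simp add: nc_zero_def)
  ultimately have "(g (c\<^sub>1#v) * gen_x [c\<^sub>2] - gen_x [c\<^sub>1] * g (v@[c\<^sub>2]))
      + (h (c\<^sub>1#v) * gen_y [c\<^sub>2] - gen_y [c\<^sub>1] * h (v@[c\<^sub>2])) = 0"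
    by (simp add: nc_add_def lie_bracket_def)
  then show ?thesis
    by (cases c\<^sub>1; cases c\<^sub>2) (simp_all add: gen_x_def gen_y_def)
qed

lemma rotate_invariant:
  assumes "\<And>c v. f (c#v) = f (v@[c])"
  shows "f (rotate k u) = f u"
proof (induction k)
  case 0
  then show ?case by simp
next
  case (Suc k)
  have "f (rotate1 x) = f x" for x
    using assms by (cases x) auto
  then show ?case using Suc by simp
qed

lemma rotate_invariant_list_update:
  assumes f: "\<And>c v. f (c#v) = f (v@[c])" and g: "\<And>c v. g (c#v) = g (v@[c])"
    and fg: "\<And>v. f (a#v) = g (b#v)" and i: "i < length u" "u!i = a"
  shows "f u = g (u[i:=b])"
proof -
  define v where "v = drop (Suc i) u @ take i u"
  have "rotate i u = a # v"
    using i unfolding v_def by (simp add: rotate_drop_take Cons_nth_drop_Suc[symmetric])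
  moreover have "rotate i (u[i:=b]) = b # v"
    using i unfolding v_def
    by (simp add: rotate_drop_take upd_conv_take_nth_drop min_def)
  ultimately show ?thesis
    using rotate_invariant[of f i u, OF f] rotate_invariant[of g i "u[i:=b]", OF g] fg by simp
qed

lemma bracket_solution_rotate_invariant:
  fixes g :: "'k::field_char_0 ncpoly"
  assumes "nc_add (lie_bracket g gen_x) (lie_bracket (nc_deriv g) gen_y) = nc_zero"
  shows "g (c#v) = g (v@[c])" and "nc_deriv g (c#v) = nc_deriv g (v@[c])"
proof -
  note E = bracket_equation_coeffs[OF assms]
  have x_rot: "g (False#v) = g (v@[False])" for v
    using E[of False v False] by simp
  have "nc_lquot False g = (\<lambda>u. g (u@[False]))"
    using x_rot by (auto simp: nc_lquot_def)
  have y_rot: "g (True#v) = g (v@[True])" for v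
  proof -
    define d where "d = nc_deriv (nc_lquot False g) v"
    \<comment> \<open>expanding \<open>D g\<close> at \<open>x v\<close> from the left and at \<open>v x\<close> from the right
      gives \<open>g(v y) - g(y v) = d = -d\<close>\<close>
    have "g (v@[True]) = g (True#v) + d"
      using E[of False v True] nc_deriv_Cons[of g False v] by (simp add: d_def)
    moreover have "g (True#v) = d + g (v@[True])"
      using E[of True v False] nc_deriv_snoc[of g v False] \<open>nc_lquot False g = _\<close>
      by (simp add: d_def)
    ultimately have "d = 0" by simp
    then show ?thesis using \<open>g (True#v) = d + g (v@[True])\<close> by simp
  qed
  show "g (c#v) = g (v@[c])"
    using x_rot y_rot by (cases c) simp_all
  show "nc_deriv g (c#v) = nc_deriv g (v@[c])"
    using E[of True v True] E[of False v True] E[of True v False] y_rot[of v] by (cases c) simp_all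
qed

lemma bracket_solution_vanishes_on_mixed_words:
  fixes g :: "'k::field_char_0 ncpoly"
  assumes eq: "nc_add (lie_bracket g gen_x) (lie_bracket (nc_deriv g) gen_y) = nc_zero"
    and "True \<in> set w" and "False \<in> set w"
  shows "g w = 0"
proof -
  note E = bracket_equation_coeffs[OF eq] and rot = bracket_solution_rotate_invariant[OF eq]
  have "nc_deriv g (False#v) = g (True#v)" for v
    using E[of False v True] rot(1)[of True v] by simp
  then have flip: "nc_deriv g u = g (u[i:=True])" if "i < length u" "\<not> u!i" for u i
    using rotate_invariant_list_update[OF rot(2) rot(1), of False True i u] that by simp
  obtain j where j: "j < length w" "w!j"
    using \<open>True \<in> set w\<close> by (metis in_set_conv_nth)
  obtain k where k: "k < length w" "\<not> w!k"
    using \<open>False \<in> set w\<close> by (metis in_set_conv_nth)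
  define u where "u = w[j:=False]"
  define X where "X = {i. i < length u \<and> \<not> u!i}"
  have "nc_deriv g u = (\<Sum>i\<in>X. g (u[i:=True]))"
    by (simp add: nc_deriv_eq_sum_x_positions X_def)
  also have "\<dots> = (\<Sum>i\<in>X. nc_deriv g u)"
    by (rule sum.cong) (auto simp: X_def flip)
  finally have "(of_nat (card X) - 1) * nc_deriv g u = 0"
    by (simp add: algebra_simps)
  moreover have "card X \<ge> 2"
  proof -
    have "j \<noteq> k" using j k by auto
    moreover have "{j, k} \<subseteq> X"
      using j k \<open>j \<noteq> k\<close> by (simp add: X_def u_def)
    ultimately show ?thesis
      using card_mono[of X "{j, k}"] by (simp add: X_def)
  qed
  ultimately have "nc_deriv g u = 0" by simp
  moreover have "u[j:=True] = w"
    using j list_update_id[of w j] by (simp add: u_def)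
  ultimately show ?thesis
    using flip[of j u] j by (simp add: u_def)
qed

lemma free_lie_bracket_solution_eq_0:
  fixes g :: "'k::field_char_0 ncpoly"
  assumes "g \<in> free_lie"
    and eq: "nc_add (lie_bracket g gen_x) (lie_bracket (nc_deriv g) gen_y) = nc_zero"
    and "length u \<noteq> 1"
  shows "g u = 0"
proof (cases "True \<in> set u \<and> False \<in> set u")
  case True
  then show ?thesis
    using bracket_solution_vanishes_on_mixed_words[OF eq] by simp
next
  case False
  then obtain c where "\<forall>x\<in>set u. x = c"
    by (metis (full_types))
  then have "u = replicate (length u) c"
    by (simp add: replicate_length_same)
  then show ?thesis
    using free_lie_replicate_eq_0[OF \<open>g \<in> free_lie\<close> \<open>length u \<noteq> 1\<close>, of c] by simp
qed

lemma eq_gen_combination_if_letter_supported: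
  assumes "\<And>u. length u \<noteq> 1 \<Longrightarrow> g u = 0"
  shows "g = nc_add (nc_smult (g [True]) gen_y) (nc_smult (g [False]) gen_x)"
proof
  fix w :: "bool list"
  show "g w = nc_add (nc_smult (g [True]) gen_y) (nc_smult (g [False]) gen_x) w"
  proof (cases "length w = 1")
    case True
    then obtain c where "w = [c]" by (cases w) auto
    then show ?thesis by (cases c) (simp_all add: nc_add_def nc_smult_def gen_x_def gen_y_def)
  next
    case False
    then show ?thesis using assms by (simp add: nc_add_def nc_smult_def gen_x_eq_0 gen_y_eq_0)
  qed
qed

theorem corollary4p2:
  fixes \<delta> :: "'k::field_char_0 ncpoly \<Rightarrow> 'k ncpoly"
    and g :: "'k ncpoly"
  assumes "lie_derivation \<delta>"
    and "\<delta> gen_x = nc_zero"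
    and "\<delta> gen_y = gen_x"
    and "g \<in> free_lie"
    and "nc_add (lie_bracket g gen_x) (lie_bracket (\<delta> g) gen_y) = nc_zero"
    and "g \<notin> {nc_smult c gen_x | c. True}"
  shows "\<exists>\<alpha> \<beta>. g = nc_add (nc_smult \<alpha> gen_y) (nc_smult \<beta> gen_x) \<and> \<alpha> \<noteq> 0"
proof -
  have "\<delta> g = nc_deriv g"
    using lie_derivation_eq_nc_deriv assms(1-4) .
  with assms(5) have "nc_add (lie_bracket g gen_x) (lie_bracket (nc_deriv g) gen_y) = nc_zero"
    by simp
  then have "g u = 0" if "length u \<noteq> 1" for u
    using free_lie_bracket_solution_eq_0 \<open>g \<in> free_lie\<close> that by blast
  then have g_eq: "g = nc_add (nc_smult (g [True]) gen_y) (nc_smult (g [False]) gen_x)"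
    by (rule eq_gen_combination_if_letter_supported)
  moreover have "g [True] \<noteq> 0"
  proof
    assume "g [True] = 0"
    then have "g = nc_smult (g [False]) gen_x"
      using g_eq by (auto simp: nc_add_def nc_smult_def)
    then show False using assms(6) by blast
  qed
  ultimately show ?thesis by blast
qed

end
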